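(* Let $n \in \mathbb{Z}_{\geq 0}$, $k \in \mathbb{Z}_{\geq 1}$, $m_1,\dots,m_k\in\mathbb{Z}_{\geq 2}$, and let \[ G = \langle e_1, \ldots, e_k, h_1, \ldots, h_{2n} \mid e_1^{m_1} = \cdots = e_k^{m_k} = 1 \rangle . \] Let $G_1$ be the subgroup of $G$ generated by $\{e_1,\dots,e_k\}$ and let $S_1\subset G$ be the set defined below. Then for every $w \in G_1$ there exist an element $\gamma$ of the subgroup $\langle S_1\rangle$ generated by $S_1$ and integers $i_1,\dots,i_k$ such that $\gamma w = e_k^{i_k}\cdots e_1^{i_1}$.
   Context: Notation: $[l]=\{1,\dots,l\}$ for $l\in\mathbb{Z}_{>0}$; $[g,h]=ghg^{-1}h^{-1}$ and ${}^{g}h = ghg^{-1}$. For $2\le t\le k$ set $\Lambda_t = \big(([m_1]\times\cdots\times[m_{t-1}])\setminus\{(m_1,\dots,m_{t-1})\}\big)\times[m_t-1]$ and $\Xi_t=[m_{t+1}]\times\cdots\times[m_k]$, where $\Xi_k=\{0\}$. For $\lambda=(u_1,\dots,u_t)\in\Lambda_t$ and $\xi=(u_{t+1},\dots,u_k)\in\Xi_t$ put $f_\lambda=[e_t^{u_t}, e_{t-1}^{u_{t-1}}\cdots e_1^{u_1}]$ and $g_\xi = e_k^{u_k}\cdots e_{t+1}^{u_{t+1}}$ (with $g_\xi=1$ for $\xi\in\Xi_k$). Then $S_1=\{{}^{g_\xi}f_\lambda \mid 2\le t\le k,\ \lambda\in\Lambda_t,\ \xi\in\Xi_t\}$. *)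

theory Defs
  imports "HOL-Algebra.Algebra"
begin

text \<open>Descending ordered product  f b * f (b-1) * ... * f a  in the group G
  (equal to the identity when b < a).\<close>
definition dprod :: "('a, 'b) monoid_scheme \<Rightarrow> (nat \<Rightarrow> 'a) \<Rightarrow> nat \<Rightarrow> nat \<Rightarrow> 'a" where
  "dprod G f a b = foldr (\<lambda>i acc. f i \<otimes>\<^bsub>G\<^esub> acc) (rev [a..<Suc b]) \<one>\<^bsub>G\<^esub>"

definition gcomm :: "('a, 'b) monoid_scheme \<Rightarrow> 'a \<Rightarrow> 'a \<Rightarrow> 'a" where
  "gcomm G g h = g \<otimes>\<^bsub>G\<^esub> h \<otimes>\<^bsub>G\<^esub> inv\<^bsub>G\<^esub> g \<otimes>\<^bsub>G\<^esub> inv\<^bsub>G\<^esub> h"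

definition gconj :: "('a, 'b) monoid_scheme \<Rightarrow> 'a \<Rightarrow> 'a \<Rightarrow> 'a" where
  "gconj G g h = g \<otimes>\<^bsub>G\<^esub> h \<otimes>\<^bsub>G\<^esub> inv\<^bsub>G\<^esub> g"

text \<open>A pair (lambda, xi) in Lambda_t x Xi_t is encoded as one function
  u on indices 1..k: lambda = (u 1, ..., u t), xi = (u (t+1), ..., u k).
  f_lambda = [e_t^(u t), e_(t-1)^(u (t-1)) ... e_1^(u 1)],
  g_xi = e_k^(u k) ... e_(t+1)^(u (t+1))  (empty product = 1 when t = k).\<close>
definition S1 :: "('a, 'b) monoid_scheme \<Rightarrow> (nat \<Rightarrow> 'a) \<Rightarrow> (nat \<Rightarrow> nat) \<Rightarrow> nat \<Rightarrow> 'a set" where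
  "S1 G e m k =
     { gconj G (dprod G (\<lambda>j. e j [^]\<^bsub>G\<^esub> u j) (Suc t) k)
               (gcomm G (e t [^]\<^bsub>G\<^esub> u t) (dprod G (\<lambda>j. e j [^]\<^bsub>G\<^esub> u j) 1 (t - 1)))
     | t u. 2 \<le> t \<and> t \<le> k
          \<and> (\<forall>i\<in>{1..<t}. 1 \<le> u i \<and> u i \<le> m i)
          \<and> (\<exists>i\<in>{1..<t}. u i \<noteq> m i)
          \<and> 1 \<le> u t \<and> u t \<le> m t - 1
          \<and> (\<forall>i\<in>{Suc t..k}. 1 \<le> u i \<and> u i \<le> m i) }"

end

theory Submission
  imports Defs
begin

(* Write the ordered product e_k^(i_k) ... e_1^(i_1) as A x B, where x = e_j^(i_j) and A, B
   collect the factors with index above and below j. For every d,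
     A x B d = ^A[x, B] (^A[x d, B])^-1 (A (x d) B),
   so right multiplication by e_j^d only changes the exponent of e_j, up to a left factor in
   <S_1>, provided every ^A[e_j^r, B] lies in <S_1>. After reducing all exponents modulo m_l
   into {1..m_l} such an element is trivial (when e_j^r = 1 or B = 1) or belongs to S_1.
   Induction along a word in the e_j^(+-1) gives the claim. *)

context group
begin

lemma foldr_mult_closed:
  "(\<And>x. x \<in> set xs \<Longrightarrow> f x \<in> carrier G) \<Longrightarrow> foldr (\<lambda>x acc. f x \<otimes> acc) xs \<one> \<in> carrier G"
  by (induction xs) auto

lemma foldr_mult_eq_mult:
  "(\<And>x. x \<in> set xs \<Longrightarrow> f x \<in> carrier G) \<Longrightarrow> z \<in> carrier G \<Longrightarrow>
   foldr (\<lambda>x acc. f x \<otimes> acc) xs z = foldr (\<lambda>x acc. f x \<otimes> acc) xs \<one> \<otimes> z"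
  by (induction xs) (auto simp: m_assoc foldr_mult_closed)

lemma dprod_closed:
  "(\<And>l. l \<in> {a..b} \<Longrightarrow> f l \<in> carrier G) \<Longrightarrow> dprod G f a b \<in> carrier G"
  unfolding dprod_def by (rule foldr_mult_closed) auto

lemma dprod_cong: "(\<And>l. l \<in> {a..b} \<Longrightarrow> f l = g l) \<Longrightarrow> dprod G f a b = dprod G g a b"
  unfolding dprod_def by (rule foldr_cong) auto

lemma dprod_const_one: "dprod G (\<lambda>_. \<one>) a b = \<one>"
proof -
  have "foldr (\<lambda>_ acc. \<one> \<otimes> acc) xs \<one> = \<one>" for xs :: "nat list"
    by (induction xs) auto
  then show ?thesis unfolding dprod_def by simp
qed

lemma dprod_split:
  assumes "a \<le> Suc c" "c \<le> b" "\<And>l. l \<in> {a..b} \<Longrightarrow> f l \<in> carrier G"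
  shows "dprod G f a b = dprod G f (Suc c) b \<otimes> dprod G f a c"
proof -
  have "[a..<Suc b] = [a..<Suc c] @ [Suc c..<Suc b]"
    using upt_add_eq_append[of a "Suc c" "b - c"] assms by simp
  then have split: "rev [a..<Suc b] = rev [Suc c..<Suc b] @ rev [a..<Suc c]" by simp
  show ?thesis
    unfolding dprod_def split foldr_append using assms
    by (intro foldr_mult_eq_mult foldr_mult_closed) auto
qed

lemma dprod_split_at:
  assumes "a \<le> j" "j \<le> b" "0 < j" "\<And>l. l \<in> {a..b} \<Longrightarrow> f l \<in> carrier G"
  shows "dprod G f a b = dprod G f (Suc j) b \<otimes> (f j \<otimes> dprod G f a (j - 1))"
proof -
  have "dprod G f a b = dprod G f (Suc j) b \<otimes> dprod G f a j"
    using assms by (intro dprod_split) auto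
  also have "dprod G f a j = dprod G f j j \<otimes> dprod G f a (j - 1)"
    using assms dprod_split[of a "j - 1" j f] by auto
  also have "dprod G f j j = f j"
    unfolding dprod_def using assms by simp
  finally show ?thesis .
qed

lemma int_pow_eq_mod:
  assumes "x \<in> carrier G" "x [^] (n::nat) = \<one>" "i mod int n = i' mod int n"
  shows "x [^] i = x [^] i'"
proof -
  have "ord x dvd n" using assms(1,2) pow_eq_id by blast
  moreover have "int n dvd i' - i" using assms(3) by (metis mod_eq_dvd_iff)
  ultimately show ?thesis
    using assms(1) int_pow_eq by (meson dvd_trans int_dvd_int_iff)
qed

lemma gconj_gcomm_shift:
  assumes [simp]: "A \<in> carrier G" "x \<in> carrier G" "B \<in> carrier G" "d \<in> carrier G"
  shows "A \<otimes> x \<otimes> B \<otimes> d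
    = gconj G A (gcomm G x B) \<otimes> inv (gconj G A (gcomm G (x \<otimes> d) B)) \<otimes> (A \<otimes> (x \<otimes> d) \<otimes> B)"
proof -
  have cancel: "inv a \<otimes> (a \<otimes> z) = z" "a \<otimes> (inv a \<otimes> z) = z"
    if "a \<in> carrier G" "z \<in> carrier G" for a z
    using that by (simp_all add: m_assoc [symmetric])
  show ?thesis
    unfolding gconj_def gcomm_def by (simp add: m_assoc inv_mult_group cancel)
qed

lemma generate_right_mult_induct:
  assumes "S \<subseteq> carrier G" "w \<in> generate G S" "P \<one>"
    and step: "\<And>x s. x \<in> carrier G \<Longrightarrow> P x \<Longrightarrow> s \<in> S \<Longrightarrow> P (x \<otimes> s) \<and> P (x \<otimes> inv s)"
  shows "P w"
proof -
  have "\<forall>x\<in>carrier G. P x \<longrightarrow> P (x \<otimes> w)"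
    using assms(2)
  proof (induction w rule: generate.induct)
    case (eng g h)
    have "g \<in> carrier G" "h \<in> carrier G"
      using eng.hyps generate_in_carrier assms(1) by blast+
    with eng.IH show ?case by (metis m_assoc m_closed)
  qed (use step in auto)
  moreover have "w \<in> carrier G" using assms(1,2) generate_in_carrier by blast
  ultimately show ?thesis using assms(3) by force
qed

end

definition pos_residue :: "nat \<Rightarrow> int \<Rightarrow> nat" where
  "pos_residue n i = nat ((i - 1) mod int n) + 1"

lemma pos_residue_pos [simp]: "0 < pos_residue n i"
  unfolding pos_residue_def by simp

lemma pos_residue_le: "0 < n \<Longrightarrow> pos_residue n i \<le> n"
  using pos_mod_bound[of "int n" "i - 1"] unfolding pos_residue_def by (simp add: Suc_le_eq nat_less_iff)

lemma pos_residue_mod: "0 < n \<Longrightarrow> int (pos_residue n i) mod int n = i mod int n"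
  unfolding pos_residue_def by (simp add: mod_simps)

locale torsion_generators = group G for G (structure) +
  fixes e :: "nat \<Rightarrow> 'a" and m :: "nat \<Rightarrow> nat" and k :: nat
  assumes gens_closed: "e ` {1..k} \<subseteq> carrier G"
    and exponents_ge_2: "\<forall>i\<in>{1..k}. 2 \<le> m i"
    and pow_exponent: "\<forall>i\<in>{1..k}. e i [^] m i = \<one>"
begin

abbreviation S1_span :: "'a set" where
  "S1_span \<equiv> generate G (S1 G e m k)"

lemma gen_closed [simp]: "l \<in> {1..k} \<Longrightarrow> e l \<in> carrier G"
  using gens_closed by auto

lemma S1_subset_carrier: "S1 G e m k \<subseteq> carrier G"
  unfolding S1_def gconj_def gcomm_def by (fastforce intro!: dprod_closed)

lemma subgroup_S1_span: "subgroup S1_span G"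
  using S1_subset_carrier by (rule generate_is_subgroup)

lemma gconj_gcomm_nat_pow_in_S1_span:
  fixes u :: "nat \<Rightarrow> nat"
  assumes j: "j \<in> {1..k}" and u: "\<forall>l\<in>{1..k}. 1 \<le> u l \<and> u l \<le> m l"
  shows "gconj G (dprod G (\<lambda>l. e l [^] u l) (Suc j) k)
           (gcomm G (e j [^] u j) (dprod G (\<lambda>l. e l [^] u l) 1 (j - 1))) \<in> S1_span"
    (is "gconj G ?A (gcomm G ?x ?B) \<in> _")
proof (cases "u j = m j \<or> (\<forall>l\<in>{1..<j}. u l = m l)")
  case True
  have "?A \<in> carrier G" by (auto intro!: dprod_closed)
  moreover have "?x = \<one> \<or> ?B = \<one>"
  proof (cases "u j = m j")
    case True
    then show ?thesis using j pow_exponent by auto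
  next
    case False
    then have "?B = dprod G (\<lambda>_. \<one>) 1 (j - 1)"
      using True j pow_exponent by (intro dprod_cong) auto
    then show ?thesis by (simp add: dprod_const_one)
  qed
  moreover have "?x \<in> carrier G" "?B \<in> carrier G" using j by (auto intro!: dprod_closed)
  ultimately have "gconj G ?A (gcomm G ?x ?B) = \<one>"
    unfolding gconj_def gcomm_def by auto
  then show ?thesis by (simp add: generate.one)
next
  case False
  moreover have "2 \<le> j" "u j \<le> m j - 1"
    using False u j by fastforce+
  ultimately have "gconj G ?A (gcomm G ?x ?B) \<in> S1 G e m k"
    using j u unfolding S1_def by (intro CollectI exI[of _ j] exI[of _ u] conjI) auto
  then show ?thesis by (rule generate.incl)
qed

lemma gconj_gcomm_int_pow_in_S1_span:
  fixes i :: "nat \<Rightarrow> int" and r :: int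
  assumes j: "j \<in> {1..k}"
  shows "gconj G (dprod G (\<lambda>l. e l [^] i l) (Suc j) k)
           (gcomm G (e j [^] r) (dprod G (\<lambda>l. e l [^] i l) 1 (j - 1))) \<in> S1_span"
proof -
  define u where "u = (\<lambda>l. pos_residue (m l) (i l))(j := pos_residue (m j) r)"
  have m_pos: "0 < m l" if "l \<in> {1..k}" for l
    using exponents_ge_2 that by fastforce
  have u: "\<forall>l\<in>{1..k}. 1 \<le> u l \<and> u l \<le> m l"
    using j m_pos by (auto simp: u_def pos_residue_le Suc_le_eq)
  have reduce: "e l [^] a = e l [^] pos_residue (m l) a" if "l \<in> {1..k}" for l a
  proof -
    have "e l [^] a = e l [^] int (pos_residue (m l) a)"
      using that m_pos pow_exponent by (intro int_pow_eq_mod) (auto simp: pos_residue_mod)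
    then show ?thesis by (simp add: int_pow_int)
  qed
  have "dprod G (\<lambda>l. e l [^] i l) (Suc j) k = dprod G (\<lambda>l. e l [^] u l) (Suc j) k"
    "dprod G (\<lambda>l. e l [^] i l) 1 (j - 1) = dprod G (\<lambda>l. e l [^] u l) 1 (j - 1)"
    "e j [^] r = e j [^] u j"
    using j by (auto intro!: dprod_cong reduce simp: u_def)
  then show ?thesis using gconj_gcomm_nat_pow_in_S1_span[OF j u] by simp
qed

lemma normal_form_mult_pow:
  fixes i :: "nat \<Rightarrow> int" and d :: int
  assumes j: "j \<in> {1..k}"
  shows "\<exists>\<gamma>\<in>S1_span. dprod G (\<lambda>l. e l [^] i l) 1 k \<otimes> e j [^] d
           = \<gamma> \<otimes> dprod G (\<lambda>l. e l [^] (i(j := i j + d)) l) 1 k"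
proof -
  define A where "A = dprod G (\<lambda>l. e l [^] i l) (Suc j) k"
  define B where "B = dprod G (\<lambda>l. e l [^] i l) 1 (j - 1)"
  define x where "x = e j [^] i j"
  have carrier: "A \<in> carrier G" "x \<in> carrier G" "B \<in> carrier G" "e j [^] d \<in> carrier G"
    using j by (auto simp: A_def B_def x_def intro!: dprod_closed)
  have split: "dprod G (\<lambda>l. e l [^] i l) 1 k = A \<otimes> (x \<otimes> B)"
    unfolding A_def B_def x_def using j by (intro dprod_split_at) auto
  have split': "dprod G (\<lambda>l. e l [^] (i(j := i j + d)) l) 1 k = A \<otimes> (x \<otimes> e j [^] d \<otimes> B)"
  proof -
    have "dprod G (\<lambda>l. e l [^] (i(j := i j + d)) l) (Suc j) k = A"
      "dprod G (\<lambda>l. e l [^] (i(j := i j + d)) l) 1 (j - 1) = B"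
      unfolding A_def B_def by (auto intro!: dprod_cong)
    then show ?thesis
      unfolding x_def using j by (subst dprod_split_at[of 1 j]) (auto simp: int_pow_mult)
  qed
  have "x \<otimes> e j [^] d = e j [^] (i j + d)"
    unfolding x_def using j by (simp add: int_pow_mult)
  then have "gconj G A (gcomm G x B) \<in> S1_span"
    "gconj G A (gcomm G (x \<otimes> e j [^] d) B) \<in> S1_span"
    unfolding A_def B_def x_def using gconj_gcomm_int_pow_in_S1_span[OF j] by simp_all
  then have \<gamma>: "gconj G A (gcomm G x B) \<otimes> inv (gconj G A (gcomm G (x \<otimes> e j [^] d) B)) \<in> S1_span"
    using subgroup_S1_span by (simp add: subgroup.m_closed subgroup.m_inv_closed)
  show ?thesis
    unfolding split split' using gconj_gcomm_shift[OF carrier] carrier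
    by (intro bexI[OF _ \<gamma>]) (simp add: m_assoc)
qed

lemma exists_normal_form_mult_pow:
  fixes i :: "nat \<Rightarrow> int" and d :: int
  assumes x: "x \<in> carrier G" and \<gamma>: "\<gamma> \<in> S1_span" "\<gamma> \<otimes> x = dprod G (\<lambda>l. e l [^] i l) 1 k"
    and j: "j \<in> {1..k}"
  shows "\<exists>\<gamma>'\<in>S1_span. \<gamma>' \<otimes> (x \<otimes> e j [^] d) = dprod G (\<lambda>l. e l [^] (i(j := i j + d)) l) 1 k"
proof -
  define i' where "i' = i(j := i j + d)"
  obtain \<delta> where \<delta>: "\<delta> \<in> S1_span"
    "dprod G (\<lambda>l. e l [^] i l) 1 k \<otimes> e j [^] d = \<delta> \<otimes> dprod G (\<lambda>l. e l [^] i' l) 1 k"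
    unfolding i'_def using normal_form_mult_pow[OF j] by blast
  have in_carrier: "\<gamma> \<in> carrier G" "\<delta> \<in> carrier G" "e j [^] d \<in> carrier G"
    "dprod G (\<lambda>l. e l [^] i' l) 1 k \<in> carrier G"
    using \<gamma> \<delta> j subgroup.mem_carrier[OF subgroup_S1_span] by (auto intro!: dprod_closed)
  have "(inv \<delta> \<otimes> \<gamma>) \<otimes> (x \<otimes> e j [^] d) = inv \<delta> \<otimes> ((\<gamma> \<otimes> x) \<otimes> e j [^] d)"
    using x in_carrier by (simp add: m_assoc)
  also have "\<dots> = inv \<delta> \<otimes> (\<delta> \<otimes> dprod G (\<lambda>l. e l [^] i' l) 1 k)"
    using \<gamma>(2) \<delta>(2) by simp
  also have "\<dots> = dprod G (\<lambda>l. e l [^] i' l) 1 k"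
    using in_carrier by (simp add: m_assoc [symmetric])
  finally show ?thesis
    unfolding i'_def using \<gamma> \<delta> subgroup_S1_span
    by (intro bexI[of _ "inv \<delta> \<otimes> \<gamma>"]) (simp_all add: subgroup.m_closed subgroup.m_inv_closed)
qed

lemma exists_normal_form:
  assumes "w \<in> generate G (e ` {1..k})"
  shows "\<exists>\<gamma>\<in>S1_span. \<exists>i :: nat \<Rightarrow> int. \<gamma> \<otimes> w = dprod G (\<lambda>j. e j [^] i j) 1 k"
    (is "?P w")
proof (rule generate_right_mult_induct[OF gens_closed assms, where P = "\<lambda>w. ?P w"])
  show "?P \<one>"
    using subgroup.one_closed[OF subgroup_S1_span]
    by (intro bexI[of _ \<one>] exI[of _ "\<lambda>_. 0"]) (simp_all add: dprod_const_one)
next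
  fix x s
  assume x: "x \<in> carrier G" "?P x" and "s \<in> e ` {1..k}"
  then obtain j where j: "j \<in> {1..k}" "s = e j" by blast
  have pow_eq: "e j [^] (1::int) = s" "e j [^] (-1::int) = inv s"
    using j by (simp_all add: int_pow_neg)
  have "?P (x \<otimes> e j [^] d)" for d :: int
    using x exists_normal_form_mult_pow[OF x(1) _ _ j(1)] by blast
  from this[of 1] this[of "-1"] show "?P (x \<otimes> s) \<and> ?P (x \<otimes> inv s)"
    unfolding pow_eq by blast
qed

end

theorem lemma3p8:
  fixes G :: "('a, 'b) monoid_scheme" (structure)
    and n k :: nat and m :: "nat \<Rightarrow> nat" and e h :: "nat \<Rightarrow> 'a" and w :: 'a
  assumes "group G"
    and "1 \<le> k"
    and "\<forall>i\<in>{1..k}. 2 \<le> m i"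
    and "e ` {1..k} \<subseteq> carrier G"
    and "h ` {1..2*n} \<subseteq> carrier G"
    and "\<forall>i\<in>{1..k}. e i [^] m i = \<one>"
    and "carrier G = generate G (e ` {1..k} \<union> h ` {1..2*n})"
    and "w \<in> generate G (e ` {1..k})"
  shows "\<exists>\<gamma>\<in>generate G (S1 G e m k). \<exists>i :: nat \<Rightarrow> int.
           \<gamma> \<otimes> w = dprod G (\<lambda>j. e j [^] i j) 1 k"
proof -
  interpret torsion_generators G e m k
    using assms(1,3,4,6) by (simp add: torsion_generators_def torsion_generators_axioms_def)
  show ?thesis
    using exists_normal_form[OF assms(8)] .
qed

end
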